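(* Let $W$ and $V$ be B-DMCs which are symmetric, symmetrized under the same permutation. Then for every $N=2^n$ and $i\in\{1,\dots,N\}$, $Z_{2N}^{(2i)}(W,V)=\big(Z_N^{(i)}(W,V)\big)^2$. Consequently, $Z_N^{(i)}(W,V)-Z_N^{(i)}(V)\le0$ implies $Z_{2N}^{(2i)}(W,V)-Z_{2N}^{(2i)}(V)\le0$.
   Context: A B-DMC $W:\{0,1\}\to\mathcal Y$ is given by transition probabilities $W(y|x)$, $\mathcal Y$ finite; $L_W(y)=W(y|1)/W(y|0)$. $W,V$ are "symmetric, symmetrized under the same permutation" if there is an involutive permutation $\pi$ of $\mathcal Y$ with $W(y|1)=W(\pi(y)|0)$, $V(y|1)=V(\pi(y)|0)$ for all $y$. For a B-DMC $W$: $W^-(y_1y_2|u_1)=\sum_{u_2}\tfrac12W(y_1|u_1\oplus u_2)W(y_2|u_2)$ and $W^+(y_1y_2u_1|u_2)=\tfrac12W(y_1|u_1\oplus u_2)W(y_2|u_2)$. Synthetic channels: $W_1^{(1)}=W$, $W_{2N}^{(2i-1)}=(W_N^{(i)})^-$, $W_{2N}^{(2i)}=(W_N^{(i)})^+$ (and likewise for $V$). Mismatched Bhattacharyya parameter: for B-DMCs $W,V$ on the same output alphabet $\mathcal Y$, $Z(W,V)=\sum_{y\in\mathcal Y}W(y|0)\sqrt{L_V(y)}$; $Z_N^{(i)}(W,V)=Z(W_N^{(i)},V_N^{(i)})$ and $Z_N^{(i)}(V)=Z_N^{(i)}(V,V)$. *)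

theory Defs
  imports Complex_Main
begin

text \<open>Input bit 0 is False, 1 is True; addition mod 2 is \<open>(\<noteq>)\<close>.
  A B-DMC with finite output alphabet 'y is a function W y x = W(y|x).\<close>

definition bdmc :: "('y::finite \<Rightarrow> bool \<Rightarrow> real) \<Rightarrow> bool" where
  "bdmc W \<longleftrightarrow> (\<forall>y x. 0 \<le> W y x) \<and> (\<forall>x. (\<Sum>y\<in>UNIV. W y x) = 1)"

definition sym_same_perm :: "('y \<Rightarrow> bool \<Rightarrow> real) \<Rightarrow> ('y \<Rightarrow> bool \<Rightarrow> real) \<Rightarrow> bool" where
  "sym_same_perm W V \<longleftrightarrow> (\<exists>\<pi>::'y \<Rightarrow> 'y. bij \<pi> \<and> (\<forall>y. \<pi> (\<pi> y) = y) \<and>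
      (\<forall>y. W y True = W (\<pi> y) False \<and> V y True = V (\<pi> y) False))"

text \<open>Uniform output type for all synthetic channels:
  Leaf y (original output), Pair a b (output of W^-), Trip a b u1 (output of W^+).\<close>
datatype 'y out = Leaf 'y | Pair "'y out" "'y out" | Trip "'y out" "'y out" bool

definition lift_ch :: "('y \<Rightarrow> bool \<Rightarrow> real) \<Rightarrow> 'y out \<Rightarrow> bool \<Rightarrow> real" where
  "lift_ch W z u = (case z of Leaf y \<Rightarrow> W y u | _ \<Rightarrow> 0)"

definition ch_minus :: "('y out \<Rightarrow> bool \<Rightarrow> real) \<Rightarrow> 'y out \<Rightarrow> bool \<Rightarrow> real" where
  "ch_minus W z u1 = (case z of Pair y1 y2 \<Rightarrow> (\<Sum>u2\<in>UNIV. 1/2 * W y1 (u1 \<noteq> u2) * W y2 u2) | _ \<Rightarrow> 0)"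

definition ch_plus :: "('y out \<Rightarrow> bool \<Rightarrow> real) \<Rightarrow> 'y out \<Rightarrow> bool \<Rightarrow> real" where
  "ch_plus W z u2 = (case z of Trip y1 y2 u1 \<Rightarrow> 1/2 * W y1 (u1 \<noteq> u2) * W y2 u2 | _ \<Rightarrow> 0)"

text \<open>synth W n i = W_N^{(i)} with N = 2^n, 1 \<le> i \<le> N.
  W_{2N}^{(2j-1)} = (W_N^{(j)})^-, W_{2N}^{(2j)} = (W_N^{(j)})^+.\<close>
fun synth :: "('y \<Rightarrow> bool \<Rightarrow> real) \<Rightarrow> nat \<Rightarrow> nat \<Rightarrow> 'y out \<Rightarrow> bool \<Rightarrow> real" where
  "synth W 0 i = lift_ch W"
| "synth W (Suc n) i = (if even i then ch_plus (synth W n (i div 2))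
                        else ch_minus (synth W n ((i + 1) div 2)))"

fun alph :: "nat \<Rightarrow> nat \<Rightarrow> 'y out set" where
  "alph 0 i = range Leaf"
| "alph (Suc n) i = (if even i
     then {Trip a b u | a b u. a \<in> alph n (i div 2) \<and> b \<in> alph n (i div 2)}
     else {Pair a b | a b. a \<in> alph n ((i + 1) div 2) \<and> b \<in> alph n ((i + 1) div 2)})"

definition LR :: "('o \<Rightarrow> bool \<Rightarrow> real) \<Rightarrow> 'o \<Rightarrow> real" where
  "LR V y = V y True / V y False"

definition Zmis :: "'o set \<Rightarrow> ('o \<Rightarrow> bool \<Rightarrow> real) \<Rightarrow> ('o \<Rightarrow> bool \<Rightarrow> real) \<Rightarrow> real" where
  "Zmis A W V = (\<Sum>y\<in>A. W y False * sqrt (LR V y))"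

definition ZN :: "nat \<Rightarrow> nat \<Rightarrow> ('y \<Rightarrow> bool \<Rightarrow> real) \<Rightarrow> ('y \<Rightarrow> bool \<Rightarrow> real) \<Rightarrow> real" where
  "ZN n i W V = Zmis (alph n i) (synth W n i) (synth V n i)"

end

theory Submission
  imports Defs
begin

text \<open>The Bhattacharyya sum of W^+ against V^+ factors into a sum over the second output
  symbol, which is Z(W,V), times a sum over the first symbol and the revealed bit u1, which is
  the average of Z(W,V) and its input-swapped version. A common involution \<pi> exchanging the
  inputs of W and V makes the two equal, so Z(W^+,V^+) = Z(W,V)^2. Such an involution survives
  both transforms (acting on the first, resp. both, output components), hence exists for all
  synthetic channels. The implication then follows from monotonicity of squaring on
  nonnegative numbers.\<close>

definition sym_pair_on :: "'o set \<Rightarrow> ('o \<Rightarrow> bool \<Rightarrow> real) \<Rightarrow> ('o \<Rightarrow> bool \<Rightarrow> real) \<Rightarrow> ('o \<Rightarrow> 'o) \<Rightarrow> bool"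
  where "sym_pair_on A W V \<pi> \<longleftrightarrow> (\<forall>y\<in>A. \<pi> y \<in> A \<and> \<pi> (\<pi> y) = y \<and>
      W y True = W (\<pi> y) False \<and> V y True = V (\<pi> y) False)"

lemma sym_pair_on_bij_betw:
  assumes "sym_pair_on A W V \<pi>"
  shows "bij_betw \<pi> A A"
  using assms unfolding sym_pair_on_def by (intro bij_betw_byWitness[where f' = \<pi>]) auto

lemma sym_pair_on_closed:
  assumes "sym_pair_on A W V \<pi>" and "y \<in> A"
  shows "\<pi> y \<in> A" and "\<pi> (\<pi> y) = y"
  using assms unfolding sym_pair_on_def by auto

lemma sym_pair_on_flip_input:
  assumes "sym_pair_on A W V \<pi>" and "y \<in> A"
  shows "W (\<pi> y) u = W y (\<not> u)" and "V (\<pi> y) u = V y (\<not> u)"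
proof -
  from assms have "W y True = W (\<pi> y) False" "V y True = V (\<pi> y) False"
    "W (\<pi> y) True = W (\<pi> (\<pi> y)) False" "V (\<pi> y) True = V (\<pi> (\<pi> y)) False"
    using sym_pair_on_closed[OF assms] unfolding sym_pair_on_def by auto
  then show "W (\<pi> y) u = W y (\<not> u)" and "V (\<pi> y) u = V y (\<not> u)"
    using sym_pair_on_closed(2)[OF assms] by (cases u; simp)+
qed

lemma sym_pair_on_swap_input_sum:
  assumes "sym_pair_on A W V \<pi>"
  shows "(\<Sum>a\<in>A. W a True * sqrt (V a False / V a True)) = (\<Sum>a\<in>A. W a False * sqrt (LR V a))"
proof -
  have "(\<Sum>a\<in>A. W a False * sqrt (LR V a)) = (\<Sum>a\<in>A. W (\<pi> a) False * sqrt (LR V (\<pi> a)))"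
    by (rule sum.reindex_bij_betw[OF sym_pair_on_bij_betw[OF assms], symmetric])
  also have "\<dots> = (\<Sum>a\<in>A. W a True * sqrt (V a False / V a True))"
    using sym_pair_on_flip_input[OF assms] unfolding LR_def by simp
  finally show ?thesis by simp
qed

lemma sym_pair_on_ch_plus:
  assumes "sym_pair_on A W V \<pi>"
  shows "sym_pair_on {Trip a b u | a b u. a \<in> A \<and> b \<in> A} (ch_plus W) (ch_plus V)
     (\<lambda>z. case z of Trip a b u \<Rightarrow> Trip (\<pi> a) (\<pi> b) u | _ \<Rightarrow> z)"
  unfolding sym_pair_on_def
  by (auto simp: ch_plus_def sym_pair_on_closed[OF assms] sym_pair_on_flip_input[OF assms])

lemma sym_pair_on_ch_minus:
  assumes "sym_pair_on A W V \<pi>"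
  shows "sym_pair_on {Pair a b | a b. a \<in> A \<and> b \<in> A} (ch_minus W) (ch_minus V)
     (\<lambda>z. case z of Pair a b \<Rightarrow> Pair (\<pi> a) b | _ \<Rightarrow> z)"
  unfolding sym_pair_on_def
  by (auto simp: ch_minus_def UNIV_bool sym_pair_on_closed[OF assms] sym_pair_on_flip_input[OF assms])

lemma Trip_set_eq_image:
  "{Trip a b u | a b u. a \<in> A \<and> b \<in> A} = (\<lambda>(a, b, u). Trip a b u) ` (A \<times> A \<times> UNIV)"
  by (auto simp: image_iff)

lemma Pair_set_eq_image:
  "{Pair a b | a b. a \<in> A \<and> b \<in> A} = (\<lambda>(a, b). Pair a b) ` (A \<times> A)"
  by (auto simp: image_iff)

lemma finite_alph: "finite (alph n i :: 'y::finite out set)"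
proof (induction n arbitrary: i)
  case (Suc n)
  then show ?case
    unfolding alph.simps Trip_set_eq_image Pair_set_eq_image by simp
qed simp

lemma ch_plus_Bhattacharyya_term:
  "ch_plus W (Trip a b u) False * sqrt (LR (ch_plus V) (Trip a b u))
     = (1/2 * W a u * sqrt (V a (\<not> u) / V a u)) * (W b False * sqrt (LR V b))"
proof -
  have "LR (ch_plus V) (Trip a b u) = (V a (\<not> u) / V a u) * LR V b"
    unfolding LR_def ch_plus_def by (simp add: field_simps)
  then have "sqrt (LR (ch_plus V) (Trip a b u)) = sqrt (V a (\<not> u) / V a u) * sqrt (LR V b)"
    by (simp only: real_sqrt_mult)
  then show ?thesis
    by (simp add: ch_plus_def)
qed

theorem Zmis_ch_plus:
  assumes "finite A" and "sym_pair_on A W V \<pi>"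
  shows "Zmis {Trip a b u | a b u. a \<in> A \<and> b \<in> A} (ch_plus W) (ch_plus V) = (Zmis A W V)\<^sup>2"
proof -
  define f where "f a u = 1/2 * W a u * sqrt (V a (\<not> u) / V a u)" for a u
  define g where "g b = W b False * sqrt (LR V b)" for b
  have inj: "inj_on (\<lambda>(a, b, u). Trip a b u) (A \<times> A \<times> UNIV)"
    by (auto simp: inj_on_def)
  have "Zmis {Trip a b u | a b u. a \<in> A \<and> b \<in> A} (ch_plus W) (ch_plus V)
      = (\<Sum>(a, b, u)\<in>A \<times> A \<times> UNIV. f a u * g b)"
    unfolding Zmis_def Trip_set_eq_image sum.reindex[OF inj]
    by (simp add: ch_plus_Bhattacharyya_term f_def g_def split_def)
  also have "\<dots> = (\<Sum>a\<in>A. \<Sum>b\<in>A. \<Sum>u\<in>UNIV. f a u * g b)"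
    by (simp add: sum.cartesian_product split_def)
  also have "\<dots> = (\<Sum>a\<in>A. f a False + f a True) * (\<Sum>b\<in>A. g b)"
    by (simp add: UNIV_bool sum_distrib_left sum_distrib_right algebra_simps sum.distrib)
  also have "(\<Sum>a\<in>A. f a False + f a True) = Zmis A W V"
    using sym_pair_on_swap_input_sum[OF assms(2)]
    by (simp add: f_def sum.distrib sum_divide_distrib[symmetric] Zmis_def LR_def)
  also have "(\<Sum>b\<in>A. g b) = Zmis A W V"
    unfolding Zmis_def g_def ..
  finally show ?thesis
    by (simp add: power2_eq_square)
qed

lemma sym_same_perm_sym_pair_on_alph:
  fixes W V :: "'y::finite \<Rightarrow> bool \<Rightarrow> real"
  assumes "sym_same_perm W V"
  shows "\<exists>\<pi>. sym_pair_on (alph n i) (synth W n i) (synth V n i) \<pi>"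
proof (induction n arbitrary: i)
  case 0
  from assms obtain \<pi> :: "'y \<Rightarrow> 'y" where "\<forall>y. \<pi> (\<pi> y) = y"
    and "\<forall>y. W y True = W (\<pi> y) False \<and> V y True = V (\<pi> y) False"
    unfolding sym_same_perm_def by blast
  then have "sym_pair_on (range Leaf) (lift_ch W) (lift_ch V)
      (\<lambda>z. case z of Leaf y \<Rightarrow> Leaf (\<pi> y) | _ \<Rightarrow> z)"
    unfolding sym_pair_on_def by (auto simp: lift_ch_def)
  then show ?case by auto
next
  case (Suc n)
  then show ?case
    using sym_pair_on_ch_plus sym_pair_on_ch_minus by (simp, blast)
qed

lemma synth_nonneg:
  assumes "bdmc W"
  shows "0 \<le> synth W n i z u"
proof (induction n arbitrary: i z u)
  case 0
  then show ?case
    using assms by (auto simp: lift_ch_def bdmc_def split: out.split)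
next
  case (Suc n)
  then show ?case
    by (auto simp: ch_plus_def ch_minus_def UNIV_bool split: out.split intro!: add_nonneg_nonneg)
qed

lemma ZN_nonneg:
  assumes "bdmc W" and "bdmc V"
  shows "0 \<le> ZN n i W V"
  unfolding ZN_def Zmis_def LR_def
  using synth_nonneg[OF assms(1)] synth_nonneg[OF assms(2)]
  by (intro sum_nonneg mult_nonneg_nonneg) auto

lemma ZN_Suc_even:
  fixes W V :: "'y::finite \<Rightarrow> bool \<Rightarrow> real"
  assumes "sym_same_perm W V"
  shows "ZN (Suc n) (2 * i) W V = (ZN n i W V)\<^sup>2"
proof -
  obtain \<pi> where "sym_pair_on (alph n i) (synth W n i) (synth V n i) \<pi>"
    using sym_same_perm_sym_pair_on_alph[OF assms] by blast
  from Zmis_ch_plus[OF finite_alph this] show ?thesis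
    by (simp add: ZN_def)
qed

theorem mainTheorem11:
  fixes W V :: "'y::finite \<Rightarrow> bool \<Rightarrow> real"
  assumes "bdmc W" and "bdmc V" and "sym_same_perm W V"
  shows "\<forall>n i. 1 \<le> i \<and> i \<le> 2 ^ n \<longrightarrow>
           ZN (Suc n) (2 * i) W V = (ZN n i W V)\<^sup>2 \<and>
           (ZN n i W V - ZN n i V V \<le> 0 \<longrightarrow> ZN (Suc n) (2 * i) W V - ZN (Suc n) (2 * i) V V \<le> 0)"
proof (intro allI impI conjI)
  fix n i
  have "sym_same_perm V V"
    using assms(3) unfolding sym_same_perm_def by blast
  then have Z_VV: "ZN (Suc n) (2 * i) V V = (ZN n i V V)\<^sup>2"
    by (rule ZN_Suc_even)
  show Z_WV: "ZN (Suc n) (2 * i) W V = (ZN n i W V)\<^sup>2"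
    using assms(3) by (rule ZN_Suc_even)
  assume "ZN n i W V - ZN n i V V \<le> 0"
  then have "(ZN n i W V)\<^sup>2 \<le> (ZN n i V V)\<^sup>2"
    using ZN_nonneg[OF assms(1,2)] by (intro power_mono) auto
  then show "ZN (Suc n) (2 * i) W V - ZN (Suc n) (2 * i) V V \<le> 0"
    using Z_WV Z_VV by simp
qed

end
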